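(* Let $G$ be a graph and $v\in V(G)$. Then \[ |M_{G-v}|+\alpha(v;G)\le |M_G|\le |M_{G-v}|+\sum_{p\in N(v)}|M_{G-(N[v]\cup N[p])}|. \] Furthermore, equality holds in the first inequality if and only if $\beta(v;G)=\varphi(v;G)$, and equality holds in the second inequality if and only if $\varphi(v;G)=0$.
   Context: Graphs are finite, simple, undirected. An induced matching is a matching whose endpoints induce a $1$-regular subgraph; it is maximal if not properly contained in another induced matching; $M_G$ is the set of maximal induced matchings of $G$ (a graph with no edges has exactly one, the empty matching). For $S\subseteq V(G)$, $G-S$ is the subgraph induced by $V(G)\setminus S$. $M_G(\emptyset,\{v\})$ is the set of maximal induced matchings of $G$ covering $v$. $\alpha(v;G)$ is the number of $M\in M_G(\emptyset,\{v\})$ such that removing from $M$ the edge incident with $v$ yields an induced matching that is not maximal in $G-v$; $\beta(v;G)$ is the number of $M\in M_G(\emptyset,\{v\})$ such that removing the edge incident with $v$ yields a maximal induced matching of $G-v$. $\varphi(v;G)$ is the number of maximal induced matchings of $G-v$ that are not maximal induced matchings of $G$. *)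

theory Defs
  imports Main
begin

definition graph :: "'a set \<Rightarrow> 'a set set \<Rightarrow> bool" where
  "graph V E \<longleftrightarrow> finite V \<and> (\<forall>e\<in>E. \<exists>x y. x \<noteq> y \<and> e = {x, y} \<and> x \<in> V \<and> y \<in> V)"

definition del_verts :: "'a set \<Rightarrow> 'a set set \<Rightarrow> 'a set \<Rightarrow> 'a set \<times> 'a set set" where
  "del_verts V E S = (V - S, {e \<in> E. e \<subseteq> V - S})"

definition nbhd :: "'a set set \<Rightarrow> 'a \<Rightarrow> 'a set" where
  "nbhd E v = {u. {u, v} \<in> E}"

definition closed_nbhd :: "'a set set \<Rightarrow> 'a \<Rightarrow> 'a set" where
  "closed_nbhd E v = insert v (nbhd E v)"

text \<open>An induced matching: a set of pairwise disjoint edges whose endpoints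
  induce a 1-regular subgraph, i.e. every edge of G between covered vertices
  belongs to M.\<close>
definition induced_matching :: "'a set set \<Rightarrow> 'a set set \<Rightarrow> bool" where
  "induced_matching E M \<longleftrightarrow> M \<subseteq> E \<and>
     (\<forall>e\<in>M. \<forall>f\<in>M. e \<noteq> f \<longrightarrow> e \<inter> f = {}) \<and>
     (\<forall>e\<in>E. e \<subseteq> \<Union>M \<longrightarrow> e \<in> M)"

definition maximal_induced_matching :: "'a set set \<Rightarrow> 'a set set \<Rightarrow> bool" where
  "maximal_induced_matching E M \<longleftrightarrow> induced_matching E M \<and>
     \<not> (\<exists>M'. induced_matching E M' \<and> M \<subset> M')"

definition MIM :: "'a set \<Rightarrow> 'a set set \<Rightarrow> 'a set set set" where
  "MIM V E = {M. maximal_induced_matching E M}"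

definition MIM_del :: "'a set \<Rightarrow> 'a set set \<Rightarrow> 'a set \<Rightarrow> 'a set set set" where
  "MIM_del V E S = (case del_verts V E S of (V', E') \<Rightarrow> MIM V' E')"

definition MIM_cov :: "'a set \<Rightarrow> 'a set set \<Rightarrow> 'a \<Rightarrow> 'a set set set" where
  "MIM_cov V E v = {M \<in> MIM V E. v \<in> \<Union>M}"

definition drop_edge_at :: "'a \<Rightarrow> 'a set set \<Rightarrow> 'a set set" where
  "drop_edge_at v M = {e \<in> M. v \<notin> e}"

definition alpha_v :: "'a \<Rightarrow> 'a set \<Rightarrow> 'a set set \<Rightarrow> nat" where
  "alpha_v v V E = card {M \<in> MIM_cov V E v. drop_edge_at v M \<notin> MIM_del V E {v}}"

definition beta_v :: "'a \<Rightarrow> 'a set \<Rightarrow> 'a set set \<Rightarrow> nat" where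
  "beta_v v V E = card {M \<in> MIM_cov V E v. drop_edge_at v M \<in> MIM_del V E {v}}"

definition phi_v :: "'a \<Rightarrow> 'a set \<Rightarrow> 'a set set \<Rightarrow> nat" where
  "phi_v v V E = card {M \<in> MIM_del V E {v}. M \<notin> MIM V E}"

end

theory Submission
  imports Defs
begin

text \<open>A maximal induced matching of G avoiding v is also maximal in G - v, and the maximal
  induced matchings of G - v not arising this way are counted by \<phi>(v;G). One containing the
  edge vp is exactly vp added to a maximal induced matching of G - (N[v] \<union> N[p]), so those
  covering v number \<Sum>p\<in>N(v). |M_{G-(N[v]\<union>N[p])}| = \<alpha>(v;G) + \<beta>(v;G). A maximal induced
  matching of G - v that is not maximal in G extends to one of G, which must cover v and gives it
  back after dropping its edge at v; hence \<phi>(v;G) \<le> \<beta>(v;G).\<close>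

lemma card_filter_add_filter_not:
  "finite A \<Longrightarrow> card {x \<in> A. P x} + card {x \<in> A. \<not> P x} = card A"
  by (subst card_Un_disjoint[symmetric]) (auto intro: arg_cong[where f = card])

lemma graph_edgeE:
  assumes "graph V E" and "e \<in> E"
  obtains x y where "x \<noteq> y" and "e = {x, y}" and "x \<in> V" and "y \<in> V"
  using assms unfolding graph_def by blast

lemma graph_edge_subset: "graph V E \<Longrightarrow> e \<in> E \<Longrightarrow> e \<subseteq> V"
  by (erule graph_edgeE) auto

lemma graph_finite_edges: "graph V E \<Longrightarrow> finite E"
  using graph_edge_subset[of V E] finite_subset[of E "Pow V"] unfolding graph_def by blast

lemma graph_finite_nbhd: "graph V E \<Longrightarrow> finite (nbhd E v)"
  using graph_edge_subset[of V E] finite_subset[of "nbhd E v" V]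
  unfolding graph_def nbhd_def by blast

lemma induced_matching_subset_edges: "induced_matching E M \<Longrightarrow> M \<subseteq> E"
  unfolding induced_matching_def by blast

lemma induced_matching_disjoint:
  "induced_matching E M \<Longrightarrow> e \<in> M \<Longrightarrow> f \<in> M \<Longrightarrow> e \<noteq> f \<Longrightarrow> e \<inter> f = {}"
  unfolding induced_matching_def by blast

lemma induced_matching_closed:
  "induced_matching E M \<Longrightarrow> e \<in> E \<Longrightarrow> e \<subseteq> \<Union>M \<Longrightarrow> e \<in> M"
  unfolding induced_matching_def by blast

lemma induced_matching_Union_subset:
  "graph V E \<Longrightarrow> induced_matching E M \<Longrightarrow> \<Union>M \<subseteq> V"
  using graph_edge_subset induced_matching_subset_edges by blast

lemma induced_matching_subset:
  assumes g: "graph V E" and M: "induced_matching E M" and "N \<subseteq> M"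
  shows "induced_matching E N"
proof -
  have "f \<in> N" if f: "f \<in> E" "f \<subseteq> \<Union>N" for f
  proof -
    have "f \<in> M"
      using induced_matching_closed[OF M f(1)] f(2) \<open>N \<subseteq> M\<close> by blast
    obtain x y where "f = {x, y}" using graph_edgeE[OF g f(1)] by blast
    then obtain h where "h \<in> N" "x \<in> h" using f(2) by blast
    moreover have "h \<in> M" "x \<in> f" using \<open>h \<in> N\<close> \<open>N \<subseteq> M\<close> \<open>f = {x, y}\<close> by auto
    ultimately have "f = h" using induced_matching_disjoint[OF M \<open>f \<in> M\<close>] by blast
    with \<open>h \<in> N\<close> show ?thesis by simp
  qed
  moreover have "N \<subseteq> E" using induced_matching_subset_edges[OF M] \<open>N \<subseteq> M\<close> by blast
  moreover have "\<forall>e\<in>N. \<forall>f\<in>N. e \<noteq> f \<longrightarrow> e \<inter> f = {}"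
    using induced_matching_disjoint[OF M] \<open>N \<subseteq> M\<close> by blast
  ultimately show ?thesis unfolding induced_matching_def by blast
qed

lemma induced_matching_restrict_iff:
  "induced_matching {e \<in> E. e \<subseteq> W} M \<longleftrightarrow> induced_matching E M \<and> \<Union>M \<subseteq> W"
  unfolding induced_matching_def
proof safe
  fix e assume "M \<subseteq> {e \<in> E. e \<subseteq> W}" "\<forall>e\<in>{e \<in> E. e \<subseteq> W}. e \<subseteq> \<Union>M \<longrightarrow> e \<in> M"
    "e \<in> E" "e \<subseteq> \<Union>M"
  then show "e \<in> M" by blast
qed auto

lemma maximal_induced_matchingI:
  "induced_matching E M \<Longrightarrow> (\<And>M'. induced_matching E M' \<Longrightarrow> \<not> M \<subset> M') \<Longrightarrow>
    maximal_induced_matching E M"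
  unfolding maximal_induced_matching_def by blast

lemma maximal_induced_matchingD:
  assumes "maximal_induced_matching E M"
  shows "induced_matching E M" and "induced_matching E M' \<Longrightarrow> \<not> M \<subset> M'"
  using assms unfolding maximal_induced_matching_def by blast+

lemma maximal_induced_matching_exists_superset:
  assumes "finite E" and "induced_matching E M"
  obtains M' where "M \<subseteq> M'" and "maximal_induced_matching E M'"
proof -
  let ?I = "{M'. induced_matching E M' \<and> M \<subseteq> M'}"
  have "?I \<subseteq> Pow E" by (auto dest: induced_matching_subset_edges)
  then have "finite ?I" using \<open>finite E\<close> by (simp add: finite_subset)
  then obtain M' where M': "M' \<in> ?I" and max: "\<forall>M'' \<in> ?I. M' \<le> M'' \<longrightarrow> M' = M''"
    using finite_has_maximal2[of ?I M] assms(2) by blast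
  have "\<not> M' \<subset> M''" if "induced_matching E M''" for M''
  proof
    assume "M' \<subset> M''"
    with M' that have "M'' \<in> ?I" by auto
    with max \<open>M' \<subset> M''\<close> show False by auto
  qed
  with M' that show ?thesis unfolding maximal_induced_matching_def by blast
qed

lemma mem_MIM_iff: "M \<in> MIM V E \<longleftrightarrow> maximal_induced_matching E M"
  unfolding MIM_def by simp

lemma mem_MIM_del_iff:
  assumes "graph V E"
  shows "M \<in> MIM_del V E S \<longleftrightarrow> induced_matching E M \<and> \<Union>M \<inter> S = {} \<and>
    (\<forall>M'. induced_matching E M' \<longrightarrow> \<Union>M' \<inter> S = {} \<longrightarrow> \<not> M \<subset> M')"
proof -
  have "M \<in> MIM_del V E S \<longleftrightarrow> maximal_induced_matching {e \<in> E. e \<subseteq> V - S} M"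
    by (simp add: MIM_del_def del_verts_def MIM_def)
  also have "\<dots> \<longleftrightarrow> induced_matching E M \<and> \<Union>M \<subseteq> V - S \<and>
      (\<forall>M'. induced_matching E M' \<longrightarrow> \<Union>M' \<subseteq> V - S \<longrightarrow> \<not> M \<subset> M')"
    unfolding maximal_induced_matching_def induced_matching_restrict_iff by blast
  also have "\<dots> \<longleftrightarrow> induced_matching E M \<and> \<Union>M \<inter> S = {} \<and>
      (\<forall>M'. induced_matching E M' \<longrightarrow> \<Union>M' \<inter> S = {} \<longrightarrow> \<not> M \<subset> M')"
  proof -
    have "\<Union>M' \<subseteq> V - S \<longleftrightarrow> \<Union>M' \<inter> S = {}" if "induced_matching E M'" for M'
      using induced_matching_Union_subset[OF assms that] by blast
    then show ?thesis by (simp cong: conj_cong imp_cong)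
  qed
  finally show ?thesis .
qed

lemma finite_induced_matchings: "finite E \<Longrightarrow> finite {M. induced_matching E M}"
  using induced_matching_subset_edges by (blast intro: finite_subset[of _ "Pow E"])

lemma finite_MIM: "graph V E \<Longrightarrow> finite (MIM V E)"
  by (rule finite_subset[OF _ finite_induced_matchings[OF graph_finite_edges]])
    (auto simp: mem_MIM_iff maximal_induced_matching_def)

lemma finite_MIM_del: "graph V E \<Longrightarrow> finite (MIM_del V E S)"
  by (rule finite_subset[OF _ finite_induced_matchings[OF graph_finite_edges]])
    (auto simp: mem_MIM_del_iff)

lemma MIM_in_MIM_del:
  assumes "graph V E" and "M \<in> MIM V E" and "\<Union>M \<inter> S = {}"
  shows "M \<in> MIM_del V E S"
  using assms by (auto simp: mem_MIM_iff mem_MIM_del_iff maximal_induced_matching_def)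

lemma induced_matching_insert_edge_iff:
  assumes g: "graph V E" and e: "{v, p} \<in> E" and "{v, p} \<notin> M"
  shows "induced_matching E (insert {v, p} M) \<longleftrightarrow>
    induced_matching E M \<and> \<Union>M \<inter> (closed_nbhd E v \<union> closed_nbhd E p) = {}"
proof
  assume M': "induced_matching E (insert {v, p} M)"
  have "x \<notin> closed_nbhd E v \<union> closed_nbhd E p" if "f \<in> M" "x \<in> f" for f x
  proof -
    have fvp: "f \<inter> {v, p} = {}"
      using induced_matching_disjoint[OF M', of f "{v, p}"] that \<open>{v, p} \<notin> M\<close> by blast
    \<comment> \<open>an edge from x to v or p would lie inside the covered set, hence in the matching\<close>
    have "{x, w} \<notin> E" if "w \<in> {v, p}" for w
    proof
      assume "{x, w} \<in> E"
      then have "{x, w} \<in> insert {v, p} M"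
        using induced_matching_closed[OF M'] \<open>f \<in> M\<close> \<open>x \<in> f\<close> that by blast
      then show False
        using induced_matching_disjoint[OF M'] \<open>f \<in> M\<close> \<open>x \<in> f\<close> fvp that by blast
    qed
    then show ?thesis
      using fvp \<open>x \<in> f\<close> unfolding closed_nbhd_def nbhd_def by blast
  qed
  then show "induced_matching E M \<and> \<Union>M \<inter> (closed_nbhd E v \<union> closed_nbhd E p) = {}"
    using induced_matching_subset[OF g M'] by blast
next
  assume "induced_matching E M \<and> \<Union>M \<inter> (closed_nbhd E v \<union> closed_nbhd E p) = {}"
  then have M: "induced_matching E M"
    and far: "\<Union>M \<inter> (closed_nbhd E v \<union> closed_nbhd E p) = {}" by blast+
  have not_adj: "u \<notin> \<Union>M" if "{u, w} \<in> E" "w \<in> {v, p}" for u w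
    using far that unfolding closed_nbhd_def nbhd_def by blast
  have "f \<in> insert {v, p} M" if f: "f \<in> E" "f \<subseteq> \<Union>(insert {v, p} M)" for f
  proof -
    obtain x y where "x \<noteq> y" "f = {x, y}" using graph_edgeE[OF g f(1)] by blast
    moreover have "{y, x} \<in> E" using f(1) \<open>f = {x, y}\<close> by (simp add: insert_commute)
    ultimately have "f \<subseteq> \<Union>M \<or> f \<subseteq> {v, p}"
      using f not_adj[of x y] not_adj[of y x] by blast
    then show ?thesis
      using induced_matching_closed[OF M f(1)] \<open>x \<noteq> y\<close> \<open>f = {x, y}\<close> by auto
  qed
  moreover have "{v, p} \<inter> f = {}" if "f \<in> M" for f
    using far that unfolding closed_nbhd_def by blast
  ultimately show "induced_matching E (insert {v, p} M)"
    using M e unfolding induced_matching_def by (auto simp: Int_commute)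
qed

lemma MIM_containing_edge:
  assumes g: "graph V E" and e: "{v, p} \<in> E"
  shows "{M \<in> MIM V E. {v, p} \<in> M} =
    insert {v, p} ` MIM_del V E (closed_nbhd E v \<union> closed_nbhd E p)"
    (is "?L = insert ?e ` ?R")
proof -
  let ?X = "closed_nbhd E v \<union> closed_nbhd E p"
  have edge_notin: "?e \<notin> M" if "\<Union>M \<inter> ?X = {}" for M
    using that unfolding closed_nbhd_def by blast
  note insert_edge_iff = induced_matching_insert_edge_iff[OF g e]
  show ?thesis
  proof (intro equalityI subsetI)
    fix M assume "M \<in> ?L"
    then have max: "maximal_induced_matching E M" and "?e \<in> M" by (auto simp: mem_MIM_iff)
    define M0 where "M0 = M - {?e}"
    have M: "M = insert ?e M0" and "?e \<notin> M0" using \<open>?e \<in> M\<close> unfolding M0_def by auto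
    have M0: "induced_matching E M0 \<and> \<Union>M0 \<inter> ?X = {}"
      using maximal_induced_matchingD(1)[OF max] insert_edge_iff[OF \<open>?e \<notin> M0\<close>] M by simp
    have "\<not> M0 \<subset> M'" if "induced_matching E M'" "\<Union>M' \<inter> ?X = {}" for M'
    proof
      assume "M0 \<subset> M'"
      then have "M \<subset> insert ?e M'"
        unfolding M psubset_insert_iff using edge_notin[OF that(2)] \<open>?e \<notin> M0\<close> by simp
      moreover have "induced_matching E (insert ?e M')"
        using insert_edge_iff[OF edge_notin[OF that(2)]] that by simp
      ultimately show False using maximal_induced_matchingD(2)[OF max] by blast
    qed
    with M0 have "M0 \<in> ?R" by (simp add: mem_MIM_del_iff[OF g])
    then show "M \<in> insert ?e ` ?R" unfolding M by (rule imageI)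
  next
    fix M assume "M \<in> insert ?e ` ?R"
    then obtain M0 where M: "M = insert ?e M0" and M0: "M0 \<in> ?R" by blast
    then have far0: "\<Union>M0 \<inter> ?X = {}" and im0: "induced_matching E M0"
      and max0: "\<And>M'. induced_matching E M' \<Longrightarrow> \<Union>M' \<inter> ?X = {} \<Longrightarrow> \<not> M0 \<subset> M'"
      by (auto simp: mem_MIM_del_iff[OF g])
    have "?e \<notin> M0" using edge_notin[OF far0] .
    have "induced_matching E M"
      unfolding M insert_edge_iff[OF \<open>?e \<notin> M0\<close>] using im0 far0 by simp
    moreover have "\<not> M \<subset> M'" if "induced_matching E M'" for M'
    proof
      assume "M \<subset> M'"
      then have "?e \<in> M'" and "M0 \<subset> M' - {?e}" using M \<open>?e \<notin> M0\<close> by auto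
      moreover have "induced_matching E (M' - {?e}) \<and> \<Union>(M' - {?e}) \<inter> ?X = {}"
        using insert_edge_iff[of "M' - {?e}"] insert_Diff[OF \<open>?e \<in> M'\<close>] that by simp
      ultimately show False using max0 by blast
    qed
    ultimately show "M \<in> ?L"
      using M by (simp add: mem_MIM_iff maximal_induced_matchingI)
  qed
qed

lemma edge_at_vertex:
  assumes "graph V E" and "f \<in> E" and "v \<in> f"
  obtains p where "f = {v, p}" and "p \<in> nbhd E v"
proof -
  obtain x y where "f = {x, y}" using graph_edgeE[OF assms(1,2)] by blast
  with assms(2,3) that show ?thesis unfolding nbhd_def by (auto simp: insert_commute)
qed

lemma card_MIM_cov:
  assumes g: "graph V E"
  shows "card (MIM_cov V E v) =
    (\<Sum>p\<in>nbhd E v. card (MIM_del V E (closed_nbhd E v \<union> closed_nbhd E p)))"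
proof -
  define B where "B p = {M \<in> MIM V E. {v, p} \<in> M}" for p
  have cov: "MIM_cov V E v = (\<Union>p\<in>nbhd E v. B p)"
  proof (intro equalityI subsetI)
    fix M assume "M \<in> MIM_cov V E v"
    then obtain f where "M \<in> MIM V E" "f \<in> M" "v \<in> f" unfolding MIM_cov_def by blast
    moreover from this have "f \<in> E"
      by (auto simp: mem_MIM_iff dest: maximal_induced_matchingD(1) induced_matching_subset_edges)
    ultimately show "M \<in> (\<Union>p\<in>nbhd E v. B p)"
      unfolding B_def by (auto elim: edge_at_vertex[OF g])
  qed (auto simp: B_def MIM_cov_def)
  have disj: "B p \<inter> B q = {}" if "p \<noteq> q" for p q
  proof -
    have "{v, p} \<inter> {v, q} \<noteq> {}" "{v, p} \<noteq> {v, q}" using \<open>p \<noteq> q\<close> by (auto simp: doubleton_eq_iff)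
    then show ?thesis unfolding B_def
      by (auto simp: mem_MIM_iff dest: maximal_induced_matchingD(1) induced_matching_disjoint)
  qed
  have card_B: "card (B p) = card (MIM_del V E (closed_nbhd E v \<union> closed_nbhd E p))"
    if "p \<in> nbhd E v" for p
  proof -
    have e: "{v, p} \<in> E" using that unfolding nbhd_def by (simp add: insert_commute)
    have "{v, p} \<notin> M0" if "M0 \<in> MIM_del V E (closed_nbhd E v \<union> closed_nbhd E p)" for M0
      using that unfolding mem_MIM_del_iff[OF g] closed_nbhd_def by blast
    then have "inj_on (insert {v, p}) (MIM_del V E (closed_nbhd E v \<union> closed_nbhd E p))"
      by (auto intro: inj_onI simp: insert_ident)
    then show ?thesis
      unfolding B_def MIM_containing_edge[OF g e] by (rule card_image)
  qed
  have "card (MIM_cov V E v) = (\<Sum>p\<in>nbhd E v. card (B p))"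
    unfolding cov using graph_finite_nbhd[OF g] finite_MIM[OF g] disj
    by (intro card_UN_disjoint) (auto simp: B_def)
  also have "\<dots> = (\<Sum>p\<in>nbhd E v. card (MIM_del V E (closed_nbhd E v \<union> closed_nbhd E p)))"
    using card_B by (rule sum.cong[OF refl])
  finally show ?thesis .
qed

lemma card_MIM_avoiding_add_card_MIM_cov:
  "graph V E \<Longrightarrow> card {M \<in> MIM V E. v \<notin> \<Union>M} + card (MIM_cov V E v) = card (MIM V E)"
  using card_filter_add_filter_not[OF finite_MIM, of V E "\<lambda>M. v \<notin> \<Union>M"]
  by (simp add: MIM_cov_def)

lemma alpha_v_add_beta_v:
  "graph V E \<Longrightarrow> alpha_v v V E + beta_v v V E = card (MIM_cov V E v)"
  unfolding alpha_v_def beta_v_def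
  by (subst add.commute) (rule card_filter_add_filter_not, simp add: MIM_cov_def finite_MIM)

lemma card_MIM_avoiding_add_phi_v:
  assumes g: "graph V E"
  shows "card {M \<in> MIM V E. v \<notin> \<Union>M} + phi_v v V E = card (MIM_del V E {v})"
proof -
  have "{M \<in> MIM_del V E {v}. M \<in> MIM V E} = {M \<in> MIM V E. v \<notin> \<Union>M}"
    using MIM_in_MIM_del[OF g, of _ "{v}"] by (auto simp: mem_MIM_del_iff[OF g])
  then show ?thesis
    using card_filter_add_filter_not[OF finite_MIM_del[OF g], of "{v}" "\<lambda>M. M \<in> MIM V E"]
    unfolding phi_v_def by simp
qed

lemma MIM_del_vertex_not_MIM:
  assumes g: "graph V E" and M: "M \<in> MIM_del V E {v}" and "M \<notin> MIM V E"
  obtains M2 where "M2 \<in> MIM_cov V E v" and "drop_edge_at v M2 = M"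
proof -
  have im: "induced_matching E M" and "v \<notin> \<Union>M"
    and max: "\<And>M'. induced_matching E M' \<Longrightarrow> v \<notin> \<Union>M' \<Longrightarrow> \<not> M \<subset> M'"
    using M by (auto simp: mem_MIM_del_iff[OF g])
  have "\<not> maximal_induced_matching E M" using \<open>M \<notin> MIM V E\<close> by (simp add: mem_MIM_iff)
  then obtain M1 where "induced_matching E M1" "M \<subset> M1"
    using im unfolding maximal_induced_matching_def by blast
  obtain M2 where "M1 \<subseteq> M2" and max2: "maximal_induced_matching E M2"
    using maximal_induced_matching_exists_superset[OF graph_finite_edges[OF g] \<open>induced_matching E M1\<close>] .
  have "M \<subset> M2" using \<open>M \<subset> M1\<close> \<open>M1 \<subseteq> M2\<close> by (rule psubset_subset_trans)
  have im2: "induced_matching E M2" using maximal_induced_matchingD(1)[OF max2] .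
  have "v \<in> \<Union>M2" using max[OF im2] \<open>M \<subset> M2\<close> by blast
  have "drop_edge_at v M2 \<subseteq> M2" unfolding drop_edge_at_def by blast
  then have "induced_matching E (drop_edge_at v M2)"
    by (rule induced_matching_subset[OF g im2])
  moreover have "v \<notin> \<Union>(drop_edge_at v M2)" unfolding drop_edge_at_def by blast
  moreover have "M \<subseteq> drop_edge_at v M2"
    using \<open>M \<subset> M2\<close> \<open>v \<notin> \<Union>M\<close> unfolding drop_edge_at_def by blast
  ultimately have "drop_edge_at v M2 = M" using max by blast
  moreover have "M2 \<in> MIM_cov V E v"
    using max2 \<open>v \<in> \<Union>M2\<close> unfolding MIM_cov_def by (simp add: mem_MIM_iff)
  ultimately show ?thesis using that by blast
qed

lemma phi_v_le_beta_v:
  assumes g: "graph V E"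
  shows "phi_v v V E \<le> beta_v v V E"
proof -
  let ?B = "{M \<in> MIM_cov V E v. drop_edge_at v M \<in> MIM_del V E {v}}"
  have "{M \<in> MIM_del V E {v}. M \<notin> MIM V E} \<subseteq> drop_edge_at v ` ?B"
  proof
    fix M assume "M \<in> {M \<in> MIM_del V E {v}. M \<notin> MIM V E}"
    then have "M \<in> MIM_del V E {v}" "M \<notin> MIM V E" by auto
    then obtain M2 where "M2 \<in> MIM_cov V E v" "drop_edge_at v M2 = M"
      using MIM_del_vertex_not_MIM[OF g] by blast
    with \<open>M \<in> MIM_del V E {v}\<close> show "M \<in> drop_edge_at v ` ?B" by blast
  qed
  moreover have "finite ?B" using finite_MIM[OF g] unfolding MIM_cov_def by simp
  ultimately have "phi_v v V E \<le> card (drop_edge_at v ` ?B)"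
    unfolding phi_v_def by (simp add: card_mono)
  also have "\<dots> \<le> beta_v v V E"
    unfolding beta_v_def by (rule card_image_le[OF \<open>finite ?B\<close>])
  finally show ?thesis .
qed

theorem proposition2p5:
  fixes V :: "'a set" and E :: "'a set set" and v :: 'a
  assumes "graph V E" and "v \<in> V"
  shows "card (MIM_del V E {v}) + alpha_v v V E \<le> card (MIM V E)
    \<and> card (MIM V E) \<le> card (MIM_del V E {v})
        + (\<Sum>p\<in>nbhd E v. card (MIM_del V E (closed_nbhd E v \<union> closed_nbhd E p)))
    \<and> (card (MIM_del V E {v}) + alpha_v v V E = card (MIM V E) \<longleftrightarrow> beta_v v V E = phi_v v V E)
    \<and> (card (MIM V E) = card (MIM_del V E {v})
        + (\<Sum>p\<in>nbhd E v. card (MIM_del V E (closed_nbhd E v \<union> closed_nbhd E p)))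
       \<longleftrightarrow> phi_v v V E = 0)"
  using card_MIM_avoiding_add_card_MIM_cov[OF assms(1), of v] alpha_v_add_beta_v[OF assms(1), of v]
    card_MIM_avoiding_add_phi_v[OF assms(1), of v] phi_v_le_beta_v[OF assms(1), of v]
    card_MIM_cov[OF assms(1), of v]
  by linarith

end
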